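(* Let $7/3<p<5$. Then the function $m\mapsto E_{\min}(m)$ is continuous on $(0,\infty)$.
   Context: On $H^1(\mathbb{R}^3)$: $\mathcal{E}(u)=\frac12\|\nabla u\|_{L^2}^2-\frac1{p+1}\|u\|_{L^{p+1}}^{p+1}-\frac16\|u\|_{L^6}^6$, $\mathcal{K}(u)=\|\nabla u\|_{L^2}^2-\frac{3(p-1)}{2(p+1)}\|u\|_{L^{p+1}}^{p+1}-\|u\|_{L^6}^6$, and $E_{\min}(m)=\inf\{\mathcal{E}(u):u\in H^1(\mathbb{R}^3),\ \|u\|_{L^2}^2=m,\ \mathcal{K}(u)=0\}$. *)

theory Defs
  imports "HOL-Analysis.Analysis"
begin

definition test_fun :: "(real^3 \<Rightarrow> real) \<Rightarrow> (real^3 \<Rightarrow> real^3) \<Rightarrow> bool" where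
  "test_fun phi Dphi \<longleftrightarrow>
     (\<forall>x. (phi has_derivative (\<lambda>h. Dphi x \<bullet> h)) (at x)) \<and>
     continuous_on UNIV Dphi \<and>
     compact (closure {x. phi x \<noteq> 0})"

definition weak_grad :: "(real^3 \<Rightarrow> complex) \<Rightarrow> (3 \<Rightarrow> real^3 \<Rightarrow> complex) \<Rightarrow> bool" where
  "weak_grad u G \<longleftrightarrow>
     (\<forall>phi Dphi. test_fun phi Dphi \<longrightarrow>
        (\<forall>i. (LINT x|lborel. u x * of_real (Dphi x $ i)) =
             - (LINT x|lborel. G i x * of_real (phi x))))"

definition H1 :: "(real^3 \<Rightarrow> complex) \<Rightarrow> bool" where
  "H1 u \<longleftrightarrow>
     u \<in> borel_measurable lborel \<and> integrable lborel (\<lambda>x. (cmod (u x))\<^sup>2) \<and>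
     (\<exists>G. weak_grad u G \<and>
          (\<forall>i. G i \<in> borel_measurable lborel \<and> integrable lborel (\<lambda>x. (cmod (G i x))\<^sup>2)))"

text \<open>||grad u||_{L^2}^2 (the weak gradient is unique a.e., so this is well defined on H^1).\<close>
definition grad_sq :: "(real^3 \<Rightarrow> complex) \<Rightarrow> real" where
  "grad_sq u = (SOME s. \<exists>G. weak_grad u G \<and>
       (\<forall>i. G i \<in> borel_measurable lborel \<and> integrable lborel (\<lambda>x. (cmod (G i x))\<^sup>2)) \<and>
       s = (\<Sum>i\<in>UNIV. LINT x|lborel. (cmod (G i x))\<^sup>2))"

definition Lq_pow :: "real \<Rightarrow> (real^3 \<Rightarrow> complex) \<Rightarrow> real" where
  "Lq_pow q u = (LINT x|lborel. cmod (u x) powr q)"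

definition energy :: "real \<Rightarrow> (real^3 \<Rightarrow> complex) \<Rightarrow> real" where
  "energy p u = grad_sq u / 2 - Lq_pow (p + 1) u / (p + 1) - Lq_pow 6 u / 6"

definition virial :: "real \<Rightarrow> (real^3 \<Rightarrow> complex) \<Rightarrow> real" where
  "virial p u = grad_sq u - 3 * (p - 1) / (2 * (p + 1)) * Lq_pow (p + 1) u - Lq_pow 6 u"

definition E_min :: "real \<Rightarrow> real \<Rightarrow> real" where
  "E_min p m = Inf {energy p u | u. H1 u \<and> Lq_pow 2 u = m \<and> virial p u = 0}"

end

theory Submission
  imports Defs
begin

text \<open>
  On the constraint \<open>virial p u = 0\<close> the energy equals
  \<open>(3p - 7)/(4(p + 1)) Lq_pow (p + 1) u + Lq_pow 6 u / 3\<close>, a nonnegative combination of the two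
  potential terms. Given \<open>u\<close> admissible at mass \<open>m\<close> and \<open>r > 0\<close>, the dilation \<open>v x = a u (t x)\<close>
  with \<open>a\<^sup>2 = r t\<^sup>3\<close> has mass \<open>r m\<close>, and by the intermediate value theorem \<open>t\<close> can be chosen
  so that \<open>virial p v = 0\<close>, with \<open>t\<close> bounded by a quantity tending to 1 as \<open>r \<rightarrow> 1\<close>. Comparing
  the potential terms of \<open>u\<close> and \<open>v\<close> gives \<open>E_min p (r m) \<le> \<rho> r * E_min p m\<close> with \<open>\<rho>\<close> continuous
  and \<open>\<rho> 1 = 1\<close>, which squeezes \<open>E_min p m'\<close> to \<open>E_min p m\<close> as \<open>m' \<rightarrow> m\<close>. Relating \<open>grad_sq v\<close>
  to \<open>grad_sq u\<close> needs the a.e. uniqueness of weak gradients, i.e. the fundamental lemma of the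
  calculus of variations.
\<close>

section \<open>Dilations of Lebesgue integrals\<close>

lemma nn_integral_lborel_dilation:
  fixes f :: "'a::euclidean_space \<Rightarrow> ennreal"
  assumes [measurable]: "f \<in> borel_measurable borel" and c: "c \<noteq> 0"
  shows "(\<integral>\<^sup>+x. f x \<partial>lborel) = ennreal (\<bar>c\<bar>^DIM('a)) * (\<integral>\<^sup>+x. f (c *\<^sub>R x) \<partial>lborel)"
  by (subst lborel_affine[OF c, of 0])
     (simp add: nn_integral_density nn_integral_distr nn_integral_cmult)

lemma integrable_lborel_dilation:
  fixes f :: "'a::euclidean_space \<Rightarrow> 'b::{banach, second_countable_topology}"
  assumes f: "integrable lborel f" and c: "c \<noteq> 0"
  shows "integrable lborel (\<lambda>x. f (c *\<^sub>R x))"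
proof -
  have [measurable]: "f \<in> borel_measurable borel" using f by auto
  have "ennreal (\<bar>c\<bar>^DIM('a)) * (\<integral>\<^sup>+x. ennreal (norm (f (c *\<^sub>R x))) \<partial>lborel) < \<infinity>"
    using f nn_integral_lborel_dilation[OF _ c, of "\<lambda>x. ennreal (norm (f x))"]
    by (simp add: integrable_iff_bounded)
  then show ?thesis
    using c by (auto simp: integrable_iff_bounded ennreal_mult_less_top)
qed

lemma integrable_lborel_dilation_iff:
  fixes f :: "'a::euclidean_space \<Rightarrow> 'b::{banach, second_countable_topology}"
  assumes "c \<noteq> 0"
  shows "integrable lborel (\<lambda>x. f (c *\<^sub>R x)) \<longleftrightarrow> integrable lborel f"
  using integrable_lborel_dilation[of f c] integrable_lborel_dilation[of "\<lambda>x. f (c *\<^sub>R x)" "1/c"] assms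
  by auto

lemma integral_lborel_dilation:
  fixes f :: "'a::euclidean_space \<Rightarrow> 'b::{banach, second_countable_topology}"
  assumes c: "c \<noteq> 0"
  shows "(\<integral>x. f (c *\<^sub>R x) \<partial>lborel) = (1 / \<bar>c\<bar>^DIM('a)) *\<^sub>R (\<integral>x. f x \<partial>lborel)"
proof (cases "integrable lborel f")
  case True
  then have [measurable]: "f \<in> borel_measurable borel" by auto
  have "(\<integral>x. f x \<partial>lborel) = \<bar>c\<bar>^DIM('a) *\<^sub>R (\<integral>x. f (c *\<^sub>R x) \<partial>lborel)"
    using c True integrable_lborel_dilation[OF True c]
    by (subst lborel_affine[OF c, of 0]) (simp add: integral_density integral_distr)
  then show ?thesis using c by simp
next
  case False
  with c show ?thesis by (simp add: integrable_lborel_dilation_iff not_integrable_integral_eq)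
qed

lemma density_lborel_eqI_boxes:
  fixes f g :: "'a::euclidean_space \<Rightarrow> ennreal"
  assumes eq: "\<And>l u. emeasure (density lborel f) (box l u) = emeasure (density lborel g) (box l u)"
    and finite: "\<And>l u. emeasure (density lborel f) (box l u) \<noteq> \<infinity>"
  shows "density lborel f = density lborel g"
proof (rule measure_eqI_generator_eq[where E="range (\<lambda>(a, b). box a b)" and \<Omega>=UNIV
      and A="\<lambda>n. box (- (real n *\<^sub>R One)) (real n *\<^sub>R One)"])
  show "Int_stable (range (\<lambda>(a, b). box a b::'a set))"
    by (auto simp: Int_stable_def box_Int_box)
  show "sets (density lborel f) = sigma_sets UNIV (range (\<lambda>(a, b). box a b))"
    "sets (density lborel g) = sigma_sets UNIV (range (\<lambda>(a, b). box a b))"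
    by (simp_all add: borel_eq_box)
  show "(\<Union>n. box (- (real n *\<^sub>R One)) (real n *\<^sub>R One)) = (UNIV::'a set)"
    by (rule UN_box_eq_UNIV)
  show "range (\<lambda>(a, b). box a b) \<subseteq> Pow (UNIV::'a set)"
    "range (\<lambda>n. box (- (real n *\<^sub>R One)) (real n *\<^sub>R One)) \<subseteq> range (\<lambda>(a, b). box a b::'a set)"
    by auto
  show "emeasure (density lborel f) (box (- (real n *\<^sub>R One)) (real n *\<^sub>R One)) \<noteq> \<infinity>" for n
    by (rule finite)
  show "emeasure (density lborel f) X = emeasure (density lborel g) X"
    if "X \<in> range (\<lambda>(a, b). box a b)" for X
    using that eq by auto
qed

lemma emeasure_density_max_0:
  fixes g :: "'a \<Rightarrow> real"
  assumes [measurable]: "g \<in> borel_measurable M" "A \<in> sets M"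
    and g: "integrable M (\<lambda>x. indicator A x * g x)"
  shows "emeasure (density M (\<lambda>x. ennreal (max 0 (g x)))) A
    = ennreal (\<integral>x. max 0 (indicator A x * g x) \<partial>M)"
proof -
  have "emeasure (density M (\<lambda>x. ennreal (max 0 (g x)))) A
      = (\<integral>\<^sup>+x. ennreal (max 0 (indicator A x * g x)) \<partial>M)"
    by (subst emeasure_density) (auto simp: indicator_def intro!: nn_integral_cong)
  also have "\<dots> = ennreal (\<integral>x. max 0 (indicator A x * g x) \<partial>M)"
    by (rule nn_integral_eq_integral[OF integrable_max[OF integrable_zero g]]) auto
  finally show ?thesis .
qed

lemma AE_zero_if_box_integrals_zero:
  fixes f :: "'a::euclidean_space \<Rightarrow> real"
  assumes [measurable]: "f \<in> borel_measurable lborel"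
    and int: "\<And>l u. integrable lborel (\<lambda>x. indicator (box l u) x * f x)"
    and zero: "\<And>l u. (\<integral>x. indicator (box l u) x * f x \<partial>lborel) = 0"
  shows "AE x in lborel. f x = 0"
proof -
  define P where "P x = ennreal (max 0 (f x))" for x
  define N where "N x = ennreal (max 0 (- f x))" for x
  have [measurable]: "P \<in> borel_measurable lborel" "N \<in> borel_measurable lborel"
    unfolding P_def[abs_def] N_def[abs_def] by measurable
  have int_neg: "integrable lborel (\<lambda>x. indicator (box l u) x * - f x)" for l u
    using integrable_minus[OF int[of l u]] by simp
  have "density lborel P = density lborel N"
  proof (rule density_lborel_eqI_boxes)
    fix l u :: 'a
    have "0 = (\<integral>x. indicator (box l u) x * f x \<partial>lborel)"
      using zero by simp
    also have "\<dots> = (\<integral>x. max 0 (indicator (box l u) x * f x) \<partial>lborel)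
        - (\<integral>x. max 0 (indicator (box l u) x * - f x) \<partial>lborel)"
      unfolding Bochner_Integration.integral_diff[OF integrable_max[OF integrable_zero int]
          integrable_max[OF integrable_zero int_neg], symmetric]
      by (rule Bochner_Integration.integral_cong) (auto simp: indicator_def max_def)
    finally have "0 = (\<integral>x. max 0 (indicator (box l u) x * f x) \<partial>lborel)
        - (\<integral>x. max 0 (indicator (box l u) x * - f x) \<partial>lborel)" .
    then show "emeasure (density lborel P) (box l u) = emeasure (density lborel N) (box l u)"
      unfolding P_def N_def
      using emeasure_density_max_0[OF _ _ int] emeasure_density_max_0[OF _ _ int_neg] by simp
    show "emeasure (density lborel P) (box l u) \<noteq> \<infinity>"
      unfolding P_def using emeasure_density_max_0[OF _ _ int] by simp
  qed
  then have "AE x in lborel. P x = N x"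
    by (intro sigma_finite_measure.density_unique[OF sigma_finite_lborel]) auto
  then show ?thesis
    by eventually_elim (auto simp: P_def N_def max_def split: if_splits)
qed

section \<open>Smooth bumps\<close>

definition ramp_sq :: "real \<Rightarrow> real" where
  "ramp_sq s = (max 0 s)\<^sup>2"

lemma has_real_derivative_ramp_sq: "(ramp_sq has_real_derivative 2 * max 0 s) (at s)"
proof -
  consider "s > 0" | "s < 0" | "s = 0" by linarith
  then show ?thesis
  proof cases
    case 1
    have "((\<lambda>z. z\<^sup>2) has_real_derivative 2 * max 0 s) (at s)"
      using 1 DERIV_pow[of 2 s] by simp
    then show ?thesis
      by (rule has_field_derivative_transform_within_open[where S="{0<..}"])
        (use 1 in \<open>auto simp: ramp_sq_def\<close>)
  next
    case 2
    have "((\<lambda>z. 0) has_real_derivative 2 * max 0 s) (at s)"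
      using 2 by simp
    then show ?thesis
      by (rule has_field_derivative_transform_within_open[where S="{..<0}"])
        (use 2 in \<open>auto simp: ramp_sq_def\<close>)
  next
    case 3
    have "ramp_sq z - ramp_sq 0 = max 0 z * (z - 0)" for z
      by (simp add: ramp_sq_def max_def power2_eq_square)
    moreover have "isCont (max 0) (0::real)"
      by (intro continuous_intros)
    ultimately show ?thesis
      using 3 CARAT_DERIV[of ramp_sq 0 0] by auto
  qed
qed

lemma has_real_derivative_ramp_sq_compose [derivative_intros]:
  "(g has_real_derivative g') (at x within S) \<Longrightarrow>
   ((\<lambda>x. ramp_sq (g x)) has_real_derivative 2 * max 0 (g x) * g') (at x within S)"
  using DERIV_chain2[OF has_real_derivative_ramp_sq] by blast

definition smooth_step :: "real \<Rightarrow> real" where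
  "smooth_step s = 2 * ramp_sq s - 4 * ramp_sq (s - 1/2) + 2 * ramp_sq (s - 1)"

definition smooth_step' :: "real \<Rightarrow> real" where
  "smooth_step' s = 4 * max 0 s - 8 * max 0 (s - 1/2) + 4 * max 0 (s - 1)"

lemma has_real_derivative_smooth_step: "(smooth_step has_real_derivative smooth_step' s) (at s)"
  unfolding smooth_step_def[abs_def] smooth_step'_def
  by (auto intro!: derivative_eq_intros)

lemma smooth_step_eq_0: "s \<le> 0 \<Longrightarrow> smooth_step s = 0"
  by (simp add: smooth_step_def ramp_sq_def)

lemma smooth_step_eq_1: "s \<ge> 1 \<Longrightarrow> smooth_step s = 1"
  by (simp add: smooth_step_def ramp_sq_def power2_eq_square algebra_simps)

lemma smooth_step_bounds: "0 \<le> smooth_step s \<and> smooth_step s \<le> 1"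
proof -
  consider "s \<le> 0" | "0 \<le> s" "s \<le> 1/2" | "1/2 \<le> s" "s \<le> 1" | "s \<ge> 1" by linarith
  then show ?thesis
  proof cases
    case 2
    then have "smooth_step s = 2 * s\<^sup>2" by (simp add: smooth_step_def ramp_sq_def)
    moreover have "s\<^sup>2 \<le> (1/2)\<^sup>2" using 2 by (intro power_mono) auto
    ultimately show ?thesis by (simp add: power2_eq_square)
  next
    case 3
    then have "smooth_step s = 1 - 2 * (1 - s)\<^sup>2"
      by (simp add: smooth_step_def ramp_sq_def power2_eq_square algebra_simps)
    moreover have "(1 - s)\<^sup>2 \<le> (1/2)\<^sup>2" using 3 by (intro power_mono) auto
    ultimately show ?thesis by (simp add: power2_eq_square)
  qed (simp_all add: smooth_step_eq_0 smooth_step_eq_1)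
qed

lemma continuous_on_smooth_step [continuous_intros]:
  "continuous_on S f \<Longrightarrow> continuous_on S (\<lambda>x. smooth_step (f x))"
  unfolding smooth_step_def ramp_sq_def by (intro continuous_intros)

lemma continuous_on_smooth_step' [continuous_intros]:
  "continuous_on S f \<Longrightarrow> continuous_on S (\<lambda>x. smooth_step' (f x))"
  unfolding smooth_step'_def by (intro continuous_intros)

definition interval_bump :: "real \<Rightarrow> real \<Rightarrow> real \<Rightarrow> real \<Rightarrow> real" where
  "interval_bump n a b t = smooth_step (n * (t - a)) * smooth_step (n * (b - t))"

definition interval_bump' :: "real \<Rightarrow> real \<Rightarrow> real \<Rightarrow> real \<Rightarrow> real" where
  "interval_bump' n a b t =
     n * (smooth_step' (n * (t - a)) * smooth_step (n * (b - t))
          - smooth_step (n * (t - a)) * smooth_step' (n * (b - t)))"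

lemma has_real_derivative_interval_bump:
  "(interval_bump n a b has_real_derivative interval_bump' n a b t) (at t)"
proof -
  have "((\<lambda>t. smooth_step (n * (t - a))) has_real_derivative smooth_step' (n * (t - a)) * n) (at t)"
    by (rule DERIV_chain2[OF has_real_derivative_smooth_step]) (auto intro!: derivative_eq_intros)
  moreover have "((\<lambda>t. smooth_step (n * (b - t))) has_real_derivative smooth_step' (n * (b - t)) * - n) (at t)"
    by (rule DERIV_chain2[OF has_real_derivative_smooth_step]) (auto intro!: derivative_eq_intros)
  ultimately show ?thesis
    unfolding interval_bump_def[abs_def] interval_bump'_def
    by (rule DERIV_cong[OF DERIV_mult]) (simp add: algebra_simps)
qed

lemma interval_bump_eq_0: "n \<ge> 0 \<Longrightarrow> \<not> (a < t \<and> t < b) \<Longrightarrow> interval_bump n a b t = 0"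
  by (auto simp: interval_bump_def not_less intro!: smooth_step_eq_0 mult_nonneg_nonpos)

lemma interval_bump_bounds: "0 \<le> interval_bump n a b t \<and> interval_bump n a b t \<le> 1"
  using smooth_step_bounds[of "n * (t - a)"] smooth_step_bounds[of "n * (b - t)"]
  by (simp add: interval_bump_def mult_le_one)

definition box_bump :: "real \<Rightarrow> real^'n \<Rightarrow> real^'n \<Rightarrow> real^'n \<Rightarrow> real" where
  "box_bump n l h x = (\<Prod>i\<in>UNIV. interval_bump n (l$i) (h$i) (x$i))"

definition box_bump_grad :: "real \<Rightarrow> real^'n \<Rightarrow> real^'n \<Rightarrow> real^'n \<Rightarrow> real^'n" where
  "box_bump_grad n l h x =
     (\<chi> k. interval_bump' n (l$k) (h$k) (x$k) * (\<Prod>j\<in>UNIV-{k}. interval_bump n (l$j) (h$j) (x$j)))"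

lemma has_derivative_box_bump:
  "(box_bump n l h has_derivative (\<lambda>y. box_bump_grad n l h x \<bullet> y)) (at x)"
proof -
  have "((\<lambda>x. box_bump n l h x) has_derivative
      (\<lambda>y. \<Sum>i\<in>UNIV. (y $ i * interval_bump' n (l$i) (h$i) (x$i)) *
                      (\<Prod>j\<in>UNIV - {i}. interval_bump n (l$j) (h$j) (x$j)))) (at x)"
    unfolding box_bump_def
    by (intro has_derivative_prod DERIV_compose_FDERIV[OF has_real_derivative_interval_bump]
        bounded_linear.has_derivative[OF bounded_linear_vec_nth has_derivative_ident])
  then show ?thesis
    by (simp add: box_bump_grad_def inner_vec_def algebra_simps)
qed

lemma continuous_on_box_bump_grad: "continuous_on UNIV (box_bump_grad n l h)"
  unfolding box_bump_grad_def interval_bump'_def interval_bump_def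
  by (intro continuous_on_vec_lambda continuous_intros)

lemma box_bump_eq_0: "n \<ge> 0 \<Longrightarrow> x \<notin> box l h \<Longrightarrow> box_bump n l h x = 0"
  unfolding box_bump_def mem_box_cart
  by (auto intro!: prod_zero interval_bump_eq_0)

lemma box_bump_bounds: "0 \<le> box_bump n l h x \<and> box_bump n l h x \<le> 1"
  unfolding box_bump_def using interval_bump_bounds
  by (auto intro!: prod_nonneg prod_le_1)

lemma abs_box_bump_le_indicator: "n \<ge> 0 \<Longrightarrow> \<bar>box_bump n l h x\<bar> \<le> indicator (box l h) x"
  using box_bump_bounds[of n l h x] box_bump_eq_0[of n x l h]
  by (auto simp: indicator_def)

lemma box_bump_tendsto_indicator:
  "(\<lambda>n. box_bump (real n) l h x) \<longlonglongrightarrow> indicator (box l h) x"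
proof (cases "x \<in> box l h")
  case False
  then show ?thesis by (simp add: box_bump_eq_0)
next
  case True
  have large: "\<forall>\<^sub>F n in sequentially. 1 \<le> real n * d" if "0 < d" for d :: real
  proof -
    have "\<forall>\<^sub>F n in sequentially. 1 / d \<le> real n"
      using filterlim_real_sequentially by (simp add: filterlim_at_top)
    then show ?thesis
      by eventually_elim (use that in \<open>simp add: divide_le_eq mult.commute\<close>)
  qed
  have "\<forall>\<^sub>F n in sequentially. \<forall>i. 1 \<le> real n * (x$i - l$i) \<and> 1 \<le> real n * (h$i - x$i)"
    using True by (intro eventually_all_finite eventually_conj large) (auto simp: mem_box_cart)
  then have "\<forall>\<^sub>F n in sequentially. box_bump (real n) l h x = 1"
    by eventually_elim (simp add: box_bump_def interval_bump_def smooth_step_eq_1)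
  then show ?thesis
    using True by (simp add: tendsto_eventually)
qed

lemma test_fun_box_bump:
  assumes "n \<ge> 0"
  shows "test_fun (box_bump n l h) (box_bump_grad n l h)"
proof -
  have "{x. box_bump n l h x \<noteq> 0} \<subseteq> box l h"
    using box_bump_eq_0[OF assms] by blast
  then have "bounded {x. box_bump n l h x \<noteq> 0}"
    using bounded_box bounded_subset by blast
  then show ?thesis
    by (simp add: test_fun_def has_derivative_box_bump continuous_on_box_bump_grad)
qed

section \<open>Uniqueness of weak gradients\<close>

lemma continuous_on_test_fun: "test_fun phi Dphi \<Longrightarrow> continuous_on UNIV phi"
  unfolding test_fun_def
  by (blast intro: continuous_at_imp_continuous_on has_derivative_continuous)

lemma borel_measurable_test_fun: "test_fun phi Dphi \<Longrightarrow> phi \<in> borel_measurable lborel"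
  by (simp add: borel_measurable_continuous_onI continuous_on_test_fun)

lemma square_integrable_test_fun:
  assumes "test_fun phi Dphi"
  shows "integrable lborel (\<lambda>x. (phi x)\<^sup>2)"
proof -
  let ?C = "closure {x. phi x \<noteq> 0}"
  have "integrable lborel (\<lambda>x. indicator ?C x *\<^sub>R (phi x)\<^sup>2)"
    using assms continuous_on_test_fun[OF assms] unfolding test_fun_def
    by (intro borel_integrable_compact continuous_intros) (auto intro: continuous_on_subset)
  moreover have "(\<lambda>x. indicator ?C x *\<^sub>R (phi x)\<^sup>2) = (\<lambda>x. (phi x)\<^sup>2)"
  proof
    show "indicator ?C x *\<^sub>R (phi x)\<^sup>2 = (phi x)\<^sup>2" for x
      using closure_subset[of "{x. phi x \<noteq> 0}"] by (cases "phi x = 0") (auto simp: indicator_def)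
  qed
  ultimately show ?thesis by simp
qed

lemma integrable_bounded_by_product_of_square_integrable:
  fixes g :: "'a \<Rightarrow> 'b::{banach, second_countable_topology}"
  assumes "g \<in> borel_measurable M" "integrable M (\<lambda>x. (a x)\<^sup>2)" "integrable M (\<lambda>x. (b x)\<^sup>2)"
    and "\<And>x. norm (g x) \<le> \<bar>a x\<bar> * \<bar>b x\<bar>"
  shows "integrable M g"
proof (rule Bochner_Integration.integrable_bound[where f="\<lambda>x. ((a x)\<^sup>2 + (b x)\<^sup>2) / 2"])
  show "integrable M (\<lambda>x. ((a x)\<^sup>2 + (b x)\<^sup>2) / 2)"
    using assms(2,3) by auto
  have "\<bar>a x\<bar> * \<bar>b x\<bar> \<le> ((a x)\<^sup>2 + (b x)\<^sup>2) / 2" for x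
    using zero_le_power2[of "\<bar>a x\<bar> - \<bar>b x\<bar>"] by (simp add: power2_eq_square algebra_simps)
  then show "AE x in M. norm (g x) \<le> norm (((a x)\<^sup>2 + (b x)\<^sup>2) / 2)"
    using assms(4) by (intro AE_I2) (smt (verit) real_norm_def zero_le_power2)
qed fact

lemma square_integrable_diff:
  fixes f g :: "'a \<Rightarrow> 'b::{banach, second_countable_topology}"
  assumes "f \<in> borel_measurable M" "g \<in> borel_measurable M"
    and "integrable M (\<lambda>x. (norm (f x))\<^sup>2)" "integrable M (\<lambda>x. (norm (g x))\<^sup>2)"
  shows "integrable M (\<lambda>x. (norm (f x - g x))\<^sup>2)"
proof (rule Bochner_Integration.integrable_bound)
  show "integrable M (\<lambda>x. 2 * (norm (f x))\<^sup>2 + 2 * (norm (g x))\<^sup>2)"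
    using assms by auto
  have "(norm (f x - g x))\<^sup>2 \<le> 2 * (norm (f x))\<^sup>2 + 2 * (norm (g x))\<^sup>2" for x
  proof -
    have "(norm (f x - g x))\<^sup>2 \<le> (norm (f x) + norm (g x))\<^sup>2"
      by (intro power_mono norm_triangle_ineq4) simp
    also have "\<dots> \<le> 2 * (norm (f x))\<^sup>2 + 2 * (norm (g x))\<^sup>2"
      using zero_le_power2[of "norm (f x) - norm (g x)"] by (simp add: power2_eq_square algebra_simps)
    finally show ?thesis .
  qed
  then show "AE x in M. norm ((norm (f x - g x))\<^sup>2) \<le> norm (2 * (norm (f x))\<^sup>2 + 2 * (norm (g x))\<^sup>2)"
    by (intro AE_I2) simp
qed (use assms in measurable)

lemma integrable_mult_test_fun:
  fixes G :: "real^3 \<Rightarrow> complex"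
  assumes "G \<in> borel_measurable lborel" "integrable lborel (\<lambda>x. (cmod (G x))\<^sup>2)"
    and "test_fun phi Dphi"
  shows "integrable lborel (\<lambda>x. G x * of_real (phi x))"
  using assms borel_measurable_test_fun[OF assms(3)]
  by (intro integrable_bounded_by_product_of_square_integrable[OF _ assms(2) square_integrable_test_fun])
    (auto simp: norm_mult)

text \<open>The fundamental lemma of the calculus of variations: the bumps \<open>box_bump n l h\<close>
  converge boundedly to the indicator of the box, so all box integrals of \<open>H\<close> vanish.\<close>

lemma AE_zero_if_orthogonal_to_test_funs:
  fixes H :: "real^3 \<Rightarrow> real"
  assumes [measurable]: "H \<in> borel_measurable lborel" and H2: "integrable lborel (\<lambda>x. (H x)\<^sup>2)"
    and zero: "\<And>phi Dphi. test_fun phi Dphi \<Longrightarrow> (LINT x|lborel. H x * phi x) = 0"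
  shows "AE x in lborel. H x = 0"
proof (rule AE_zero_if_box_integrals_zero)
  fix l h :: "real^3"
  have ind2: "integrable lborel (\<lambda>x. (indicator (box l h) x :: real)\<^sup>2)"
  proof -
    have "(\<lambda>x. (indicator (box l h) x :: real)\<^sup>2) = indicator (box l h)"
      by (auto simp: indicator_def)
    then show ?thesis using emeasure_lborel_box_finite[of l h] by simp
  qed
  show "integrable lborel (\<lambda>x. indicator (box l h) x * H x)"
    by (rule integrable_bounded_by_product_of_square_integrable[OF _ ind2 H2]) (auto simp: abs_mult)
  have dominant: "integrable lborel (\<lambda>x. indicator (box l h) x * \<bar>H x\<bar>)"
    by (rule integrable_bounded_by_product_of_square_integrable[OF _ ind2 H2]) (auto simp: abs_mult)
  have bump_measurable: "box_bump (real n) l h \<in> borel_measurable lborel" for n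
    using borel_measurable_test_fun[OF test_fun_box_bump] by simp
  have "(\<lambda>n. LINT x|lborel. box_bump (real n) l h x * H x)
      \<longlonglongrightarrow> (LINT x|lborel. indicator (box l h) x * H x)"
  proof (rule integral_dominated_convergence[OF _ _ dominant])
    show "AE x in lborel. (\<lambda>n. box_bump (real n) l h x * H x) \<longlonglongrightarrow> indicator (box l h) x * H x"
      by (intro AE_I2 tendsto_mult box_bump_tendsto_indicator tendsto_const)
    show "AE x in lborel. norm (box_bump (real n) l h x * H x) \<le> indicator (box l h) x * \<bar>H x\<bar>" for n
      using abs_box_bump_le_indicator[of "real n" l h]
      by (intro AE_I2) (auto simp: abs_mult intro!: mult_right_mono)
  qed (use bump_measurable in auto)
  moreover have "(LINT x|lborel. box_bump (real n) l h x * H x) = 0" for n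
    using zero[OF test_fun_box_bump[of "real n" l h]] by (simp add: mult.commute)
  ultimately show "(LINT x|lborel. indicator (box l h) x * H x) = 0"
    by (simp add: LIMSEQ_const_iff)
qed fact

lemma AE_zero_if_orthogonal_to_test_funs_complex:
  fixes D :: "real^3 \<Rightarrow> complex"
  assumes Dm [measurable]: "D \<in> borel_measurable lborel"
    and D2: "integrable lborel (\<lambda>x. (cmod (D x))\<^sup>2)"
    and zero: "\<And>phi Dphi. test_fun phi Dphi \<Longrightarrow> (LINT x|lborel. D x * of_real (phi x)) = 0"
  shows "AE x in lborel. D x = 0"
proof -
  have part_zero: "AE x in lborel. P (D x) = 0" if P: "P = Re \<or> P = Im" for P
  proof (rule AE_zero_if_orthogonal_to_test_funs)
    show "(\<lambda>x. P (D x)) \<in> borel_measurable lborel"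
      using P by auto
    show "integrable lborel (\<lambda>x. (P (D x))\<^sup>2)"
      by (rule Bochner_Integration.integrable_bound[OF D2]) (use P in \<open>auto simp: cmod_power2\<close>)
    fix phi Dphi assume phi: "test_fun phi Dphi"
    have "(LINT x|lborel. P (D x) * phi x) = (LINT x|lborel. P (D x * of_real (phi x)))"
      using P by auto
    also have "\<dots> = P (LINT x|lborel. D x * of_real (phi x))"
      using P integrable_mult_test_fun[OF Dm D2 phi]
      by (elim disjE; simp only: integral_Re integral_Im)
    also have "\<dots> = 0"
      using P zero[OF phi] by auto
    finally show "(LINT x|lborel. P (D x) * phi x) = 0" .
  qed
  have "AE x in lborel. Re (D x) = 0" "AE x in lborel. Im (D x) = 0"
    using part_zero by blast+
  then show ?thesis
    by eventually_elim (simp add: complex_eq_iff)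
qed

definition L2_weak_grad :: "(real^3 \<Rightarrow> complex) \<Rightarrow> (3 \<Rightarrow> real^3 \<Rightarrow> complex) \<Rightarrow> bool" where
  "L2_weak_grad u G \<longleftrightarrow> weak_grad u G \<and>
     (\<forall>i. G i \<in> borel_measurable lborel \<and> integrable lborel (\<lambda>x. (cmod (G i x))\<^sup>2))"

lemma H1_iff_L2_weak_grad:
  "H1 u \<longleftrightarrow> u \<in> borel_measurable lborel \<and> integrable lborel (\<lambda>x. (cmod (u x))\<^sup>2) \<and>
     (\<exists>G. L2_weak_grad u G)"
  unfolding H1_def L2_weak_grad_def by blast

lemma L2_weak_grad_AE_unique:
  assumes G: "L2_weak_grad u G" and G': "L2_weak_grad u G'"
  shows "AE x in lborel. G i x = G' i x"
proof -
  have [measurable]: "G i \<in> borel_measurable lborel" "G' i \<in> borel_measurable lborel"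
    and G2: "integrable lborel (\<lambda>x. (cmod (G i x))\<^sup>2)"
    and G'2: "integrable lborel (\<lambda>x. (cmod (G' i x))\<^sup>2)"
    using G G' by (auto simp: L2_weak_grad_def)
  have "AE x in lborel. G i x - G' i x = 0"
  proof (rule AE_zero_if_orthogonal_to_test_funs_complex)
    show "(\<lambda>x. G i x - G' i x) \<in> borel_measurable lborel"
      by measurable
    show "integrable lborel (\<lambda>x. (cmod (G i x - G' i x))\<^sup>2)"
      by (rule square_integrable_diff[OF _ _ G2 G'2]) measurable
    fix phi Dphi assume phi: "test_fun phi Dphi"
    have weak: "(LINT x|lborel. u x * of_real (Dphi x $ i)) = - (LINT x|lborel. H i x * of_real (phi x))"
      if "L2_weak_grad u H" for H
      using that phi unfolding L2_weak_grad_def weak_grad_def by blast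
    have "(LINT x|lborel. (G i x - G' i x) * of_real (phi x))
        = (LINT x|lborel. G i x * of_real (phi x)) - (LINT x|lborel. G' i x * of_real (phi x))"
      using integrable_mult_test_fun[OF _ G2 phi] integrable_mult_test_fun[OF _ G'2 phi]
      by (simp add: left_diff_distrib)
    then show "(LINT x|lborel. (G i x - G' i x) * of_real (phi x)) = 0"
      using weak[OF G] weak[OF G'] by simp
  qed
  then show ?thesis by simp
qed

text \<open>\<open>grad_sq\<close> picks an arbitrary weak gradient by \<open>SOME\<close>; a.e. uniqueness makes the choice irrelevant.\<close>

lemma grad_sq_eq_sum_L2_norms:
  assumes G: "L2_weak_grad u G"
  shows "grad_sq u = (\<Sum>i\<in>UNIV. LINT x|lborel. (cmod (G i x))\<^sup>2)"
proof -
  have "grad_sq u = (SOME s. \<exists>G. L2_weak_grad u G \<and> s = (\<Sum>i\<in>UNIV. LINT x|lborel. (cmod (G i x))\<^sup>2))"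
    by (simp add: grad_sq_def L2_weak_grad_def conj_assoc)
  then have "\<exists>G'. L2_weak_grad u G' \<and> grad_sq u = (\<Sum>i\<in>UNIV. LINT x|lborel. (cmod (G' i x))\<^sup>2)"
    using someI_ex[of "\<lambda>s. \<exists>G. L2_weak_grad u G \<and> s = (\<Sum>i\<in>UNIV. LINT x|lborel. (cmod (G i x))\<^sup>2)"] G
    by auto
  then obtain G' where G': "L2_weak_grad u G'"
    and eq: "grad_sq u = (\<Sum>i\<in>UNIV. LINT x|lborel. (cmod (G' i x))\<^sup>2)" by blast
  have "(LINT x|lborel. (cmod (G' i x))\<^sup>2) = (LINT x|lborel. (cmod (G i x))\<^sup>2)" for i
  proof (rule integral_cong_AE)
    show "AE x in lborel. (cmod (G' i x))\<^sup>2 = (cmod (G i x))\<^sup>2"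
      using L2_weak_grad_AE_unique[OF G' G, of i] by auto
    have [measurable]: "G i \<in> borel_measurable lborel" "G' i \<in> borel_measurable lborel"
      using G G' by (auto simp: L2_weak_grad_def)
    show "(\<lambda>x. (cmod (G' i x))\<^sup>2) \<in> borel_measurable lborel"
      "(\<lambda>x. (cmod (G i x))\<^sup>2) \<in> borel_measurable lborel"
      by measurable
  qed
  then show ?thesis
    using eq by simp
qed

section \<open>Dilations in \<open>H\<^sup>1\<close>\<close>

lemma integral_lborel_dilation_real3:
  fixes f :: "real^3 \<Rightarrow> 'b::{banach, second_countable_topology}"
  assumes "b > 0"
  shows "(LINT x|lborel. f (b *\<^sub>R x)) = (1 / b^3) *\<^sub>R (LINT y|lborel. f y)"
  using integral_lborel_dilation[of b f] assms by simp

lemma test_fun_dilate: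
  assumes phi: "test_fun phi Dphi" and c: "c \<noteq> 0"
  shows "test_fun (\<lambda>y. phi (c *\<^sub>R y)) (\<lambda>y. c *\<^sub>R Dphi (c *\<^sub>R y))"
  unfolding test_fun_def
proof (intro conjI allI)
  have deriv: "\<And>x. (phi has_derivative (\<lambda>h. Dphi x \<bullet> h)) (at x)"
    and cont: "continuous_on UNIV Dphi"
    and "bounded {x. phi x \<noteq> 0}"
    using phi by (auto simp: test_fun_def)
  fix x :: "real^3"
  have "((\<lambda>y. phi (c *\<^sub>R y)) has_derivative (\<lambda>h. Dphi (c *\<^sub>R x) \<bullet> (c *\<^sub>R h))) (at x)"
    by (rule has_derivative_compose[OF _ deriv]) (auto intro!: derivative_eq_intros)
  then show "((\<lambda>y. phi (c *\<^sub>R y)) has_derivative (\<lambda>h. (c *\<^sub>R Dphi (c *\<^sub>R x)) \<bullet> h)) (at x)"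
    by simp
  show "continuous_on UNIV (\<lambda>y. c *\<^sub>R Dphi (c *\<^sub>R y))"
    by (intro continuous_intros continuous_on_compose2[OF cont]) auto
  obtain B where "\<And>x. phi x \<noteq> 0 \<Longrightarrow> norm x \<le> B"
    using \<open>bounded {x. phi x \<noteq> 0}\<close> by (auto simp: bounded_iff)
  then have "norm y \<le> B / \<bar>c\<bar>" if "phi (c *\<^sub>R y) \<noteq> 0" for y
    using that c by (force simp: field_simps)
  then show "compact (closure {y. phi (c *\<^sub>R y) \<noteq> 0})"
    by (auto simp: bounded_iff)
qed

text \<open>Stated for \<open>complex\<close> only: as a simp rule, \<open>scaleR_conv_of_real\<close> would also rewrite \<open>b *\<^sub>R x\<close> on \<open>real^3\<close>.\<close>

lemma complex_scaleR_conv: "r *\<^sub>R (z::complex) = of_real r * z"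
  by (rule scaleR_conv_of_real)

definition dilate :: "real \<Rightarrow> real \<Rightarrow> (real^3 \<Rightarrow> complex) \<Rightarrow> real^3 \<Rightarrow> complex" where
  "dilate a b u x = of_real a * u (b *\<^sub>R x)"

lemma weak_grad_dilate:
  assumes w: "weak_grad u G" and b: "b > 0"
  shows "weak_grad (dilate a b u) (\<lambda>i x. of_real (a * b) * G i (b *\<^sub>R x))"
  unfolding weak_grad_def
proof (intro allI impI)
  fix phi Dphi i assume phi: "test_fun phi Dphi"
  define psi where "psi y = phi ((1/b) *\<^sub>R y)" for y
  define Dpsi where "Dpsi y = (1/b) *\<^sub>R Dphi ((1/b) *\<^sub>R y)" for y
  have "test_fun psi Dpsi"
    unfolding psi_def[abs_def] Dpsi_def[abs_def] by (rule test_fun_dilate[OF phi]) (use b in simp)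
  then have weak: "(LINT y|lborel. u y * of_real (Dpsi y $ i)) = - (LINT y|lborel. G i y * of_real (psi y))"
    using w unfolding weak_grad_def by blast
  have "dilate a b u x * of_real (Dphi x $ i) = of_real (a * b) * (u (b *\<^sub>R x) * of_real (Dpsi (b *\<^sub>R x) $ i))"
    for x using b by (simp add: dilate_def Dpsi_def)
  then have "(LINT x|lborel. dilate a b u x * of_real (Dphi x $ i))
      = of_real (a * b) * (LINT x|lborel. u (b *\<^sub>R x) * of_real (Dpsi (b *\<^sub>R x) $ i))"
    by simp
  also have "\<dots> = of_real (a * b) * (of_real (1 / b^3) * (LINT y|lborel. u y * of_real (Dpsi y $ i)))"
    using integral_lborel_dilation_real3[OF b, of "\<lambda>y. u y * of_real (Dpsi y $ i)"]
    by (simp add: complex_scaleR_conv)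
  also have "\<dots> = - of_real (a * b) * (of_real (1 / b^3) * (LINT y|lborel. G i y * of_real (psi y)))"
    by (simp add: weak)
  also have "\<dots> = - of_real (a * b) * (LINT x|lborel. G i (b *\<^sub>R x) * of_real (psi (b *\<^sub>R x)))"
    using integral_lborel_dilation_real3[OF b, of "\<lambda>y. G i y * of_real (psi y)"]
    by (simp add: complex_scaleR_conv)
  also have "\<dots> = - (LINT x|lborel. of_real (a * b) * G i (b *\<^sub>R x) * of_real (phi x))"
    using b by (simp add: psi_def mult.assoc)
  finally show "(LINT x|lborel. dilate a b u x * of_real (Dphi x $ i))
      = - (LINT x|lborel. of_real (a * b) * G i (b *\<^sub>R x) * of_real (phi x))" .
qed

lemma L2_weak_grad_dilate:
  assumes G: "L2_weak_grad u G" and b: "b > 0"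
  shows "L2_weak_grad (dilate a b u) (\<lambda>i x. of_real (a * b) * G i (b *\<^sub>R x))"
  unfolding L2_weak_grad_def
proof (intro conjI allI)
  show "weak_grad (dilate a b u) (\<lambda>i x. of_real (a * b) * G i (b *\<^sub>R x))"
    using G b weak_grad_dilate unfolding L2_weak_grad_def by blast
  fix i
  have [measurable]: "G i \<in> borel_measurable borel" and G2: "integrable lborel (\<lambda>x. (cmod (G i x))\<^sup>2)"
    using G unfolding L2_weak_grad_def by auto
  show "(\<lambda>x. of_real (a * b) * G i (b *\<^sub>R x)) \<in> borel_measurable lborel"
    by measurable
  have "integrable lborel (\<lambda>x. (a * b)\<^sup>2 * (cmod (G i (b *\<^sub>R x)))\<^sup>2)"
    using integrable_lborel_dilation[OF G2] b by simp
  then show "integrable lborel (\<lambda>x. (cmod (of_real (a * b) * G i (b *\<^sub>R x)))\<^sup>2)"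
    by (simp add: norm_mult power_mult_distrib)
qed

lemma H1_dilate:
  assumes u: "H1 u" and b: "b > 0"
  shows "H1 (dilate a b u)"
proof -
  have [measurable]: "u \<in> borel_measurable borel" and u2: "integrable lborel (\<lambda>x. (cmod (u x))\<^sup>2)"
    and "\<exists>G. L2_weak_grad u G"
    using u unfolding H1_iff_L2_weak_grad by auto
  then have "\<exists>G. L2_weak_grad (dilate a b u) G"
    using L2_weak_grad_dilate[OF _ b] by blast
  moreover have "integrable lborel (\<lambda>x. a\<^sup>2 * (cmod (u (b *\<^sub>R x)))\<^sup>2)"
    using integrable_lborel_dilation[OF u2] b by simp
  moreover have "dilate a b u \<in> borel_measurable lborel"
    unfolding dilate_def[abs_def] by measurable
  ultimately show ?thesis
    unfolding H1_iff_L2_weak_grad by (simp add: dilate_def norm_mult power_mult_distrib)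
qed

lemma Lq_pow_dilate:
  assumes "a > 0" "b > 0"
  shows "Lq_pow q (dilate a b u) = a powr q / b^3 * Lq_pow q u"
proof -
  have "Lq_pow q (dilate a b u) = a powr q * (LINT x|lborel. cmod (u (b *\<^sub>R x)) powr q)"
    using assms by (simp add: Lq_pow_def dilate_def norm_mult powr_mult)
  then show ?thesis
    using integral_lborel_dilation_real3[OF assms(2), of "\<lambda>y. cmod (u y) powr q"]
    by (simp add: Lq_pow_def)
qed

lemma grad_sq_dilate:
  assumes u: "H1 u" and b: "b > 0"
  shows "grad_sq (dilate a b u) = a\<^sup>2 / b * grad_sq u"
proof -
  obtain G where G: "L2_weak_grad u G"
    using u unfolding H1_iff_L2_weak_grad by auto
  have "grad_sq (dilate a b u) = (\<Sum>i\<in>UNIV. LINT x|lborel. (cmod (of_real (a * b) * G i (b *\<^sub>R x)))\<^sup>2)"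
    by (rule grad_sq_eq_sum_L2_norms[OF L2_weak_grad_dilate[OF G b]])
  also have "\<dots> = (\<Sum>i\<in>UNIV. (a * b)\<^sup>2 * (1 / b^3) * (LINT x|lborel. (cmod (G i x))\<^sup>2))"
    using integral_lborel_dilation_real3[OF b, of "\<lambda>y. (cmod (G _ y))\<^sup>2"]
    by (simp add: norm_mult power_mult_distrib)
  also have "\<dots> = a\<^sup>2 / b * grad_sq u"
    using b by (simp add: grad_sq_eq_sum_L2_norms[OF G] sum_distrib_left power2_eq_square power3_eq_cube)
  finally show ?thesis .
qed

definition mass_scaling :: "real \<Rightarrow> real \<Rightarrow> (real^3 \<Rightarrow> complex) \<Rightarrow> real^3 \<Rightarrow> complex" where
  "mass_scaling r t = dilate (r powr (1/2) * t powr (3/2)) t"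

lemma H1_mass_scaling: "H1 u \<Longrightarrow> t > 0 \<Longrightarrow> H1 (mass_scaling r t u)"
  unfolding mass_scaling_def by (rule H1_dilate)

lemma Lq_pow_mass_scaling:
  assumes r: "r > 0" and t: "t > 0"
  shows "Lq_pow q (mass_scaling r t u) = r powr (q / 2) * t powr (3 * q / 2 - 3) * Lq_pow q u"
proof -
  have "(r powr (1/2) * t powr (3/2)) powr q / t^3 = r powr (q / 2) * (t powr (3 * q / 2) / t powr 3)"
    using r t by (simp add: powr_mult powr_powr powr_numeral)
  also have "t powr (3 * q / 2) / t powr 3 = t powr (3 * q / 2 - 3)"
    by (rule powr_diff[symmetric])
  finally have scale: "(r powr (1/2) * t powr (3/2)) powr q / t^3 = r powr (q / 2) * t powr (3 * q / 2 - 3)" .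
  have "r powr (1/2) * t powr (3/2) > 0"
    using r t by simp
  then show ?thesis
    by (simp only: mass_scaling_def Lq_pow_dilate[OF _ t] scale)
qed

lemma grad_sq_mass_scaling:
  assumes u: "H1 u" and r: "r > 0" and t: "t > 0"
  shows "grad_sq (mass_scaling r t u) = r * t\<^sup>2 * grad_sq u"
proof -
  have "(r powr (1/2) * t powr (3/2))\<^sup>2 = r * t^3"
    using r t by (simp add: power_mult_distrib powr_power powr_numeral)
  then show ?thesis
    using u t by (simp add: mass_scaling_def grad_sq_dilate power2_eq_square power3_eq_cube)
qed

section \<open>The virial constraint\<close>

lemma Lq_pow_nonneg: "Lq_pow q u \<ge> 0"
  unfolding Lq_pow_def by (intro Bochner_Integration.integral_nonneg) auto

definition virial_coeff :: "real \<Rightarrow> real" where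
  "virial_coeff p = 3 * (p - 1) / (2 * (p + 1))"

lemma virial_eq_0_iff: "virial p u = 0 \<longleftrightarrow> grad_sq u = virial_coeff p * Lq_pow (p + 1) u + Lq_pow 6 u"
  unfolding virial_def virial_coeff_def by auto

lemma energy_eq_if_virial_eq_0:
  assumes "p + 1 \<noteq> 0" "virial p u = 0"
  shows "energy p u = (3 * p - 7) / (4 * (p + 1)) * Lq_pow (p + 1) u + Lq_pow 6 u / 3"
  using assms by (simp add: energy_def virial_eq_0_iff virial_coeff_def field_simps)

lemma energy_nonneg_if_virial_eq_0:
  assumes "7/3 \<le> p" "virial p u = 0"
  shows "energy p u \<ge> 0"
  using assms Lq_pow_nonneg[of "p + 1" u] Lq_pow_nonneg[of 6 u]
  by (simp add: energy_eq_if_virial_eq_0)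

lemma power_balance_solvable:
  fixes \<gamma> R s X Y :: real
  assumes \<gamma>: "0 < \<gamma>" "\<gamma> < 4" and R: "R > 0" and s: "s > 0" and X: "X \<ge> 0" and Y: "Y \<ge> 0"
  shows "\<exists>t>0. t \<le> max 1 (1 / min R s) powr (1 / \<gamma>) \<and> R * t powr \<gamma> * X + s * t^4 * Y = X + Y"
proof -
  define F where "F t = R * t powr \<gamma> * X + s * t^4 * Y" for t
  define t0 where "t0 = min 1 ((1 / max R s) powr (1 / \<gamma>))"
  define T where "T = max 1 (1 / min R s) powr (1 / \<gamma>)"
  have t0: "0 < t0" "t0 \<le> 1"
    using R by (auto simp: t0_def)
  have "t0 powr \<gamma> \<le> ((1 / max R s) powr (1 / \<gamma>)) powr \<gamma>"
    using t0 \<gamma> by (intro powr_mono2) (auto simp: t0_def)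
  also have "\<dots> = 1 / max R s"
    using \<gamma> R by (simp add: powr_powr)
  finally have "max R s * t0 powr \<gamma> \<le> 1"
    using R by (simp add: field_simps)
  moreover have "R * t0 powr \<gamma> \<le> max R s * t0 powr \<gamma>" "s * t0 powr \<gamma> \<le> max R s * t0 powr \<gamma>"
    by (simp_all add: mult_right_mono)
  ultimately have t0_pow: "R * t0 powr \<gamma> \<le> 1" "s * t0 powr \<gamma> \<le> 1"
    by linarith+
  have "t0^4 \<le> t0 powr \<gamma>"
    using t0 \<gamma> powr_mono'[of \<gamma> 4 t0] by (simp add: powr_numeral)
  then have s_t0: "s * t0^4 \<le> 1"
    using t0_pow s by (smt (verit) mult_left_mono)
  then have F_t0: "F t0 \<le> X + Y"
    unfolding F_def using mult_right_mono[OF t0_pow(1) X] mult_right_mono[OF s_t0 Y] by simp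
  have T: "T \<ge> 1"
    unfolding T_def using \<gamma> by (intro ge_one_powr_ge_zero) auto
  have T_pow: "T powr \<gamma> = max 1 (1 / min R s)"
    unfolding T_def using \<gamma> R s by (simp add: powr_powr)
  have "1 \<le> R * (1 / min R s)" "1 \<le> s * (1 / min R s)"
    using R s by (simp_all add: min_def field_simps)
  then have "1 \<le> R * T powr \<gamma>" "1 \<le> s * T powr \<gamma>"
    unfolding T_pow using R s mult_left_mono[OF max.cobounded2[of "1 / min R s" 1]]
    by (smt (verit))+
  moreover have "T powr \<gamma> \<le> T^4"
    using T \<gamma> powr_mono[of \<gamma> 4 T] by (simp add: powr_numeral)
  ultimately have s_T: "1 \<le> s * T^4"
    using s by (smt (verit) mult_left_mono)
  then have F_T: "X + Y \<le> F T"
    unfolding F_def using mult_right_mono[OF \<open>1 \<le> R * T powr \<gamma>\<close> X] mult_right_mono[OF s_T Y]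
    by simp
  have "continuous_on {t0..T} F"
    unfolding F_def using t0 by (intro continuous_intros) auto
  then obtain t where "t0 \<le> t" "t \<le> T" "F t = X + Y"
    using IVT'[of F t0 "X + Y" T] F_t0 F_T t0 T by auto
  then show ?thesis
    using t0 unfolding F_def T_def by (intro exI[of _ t]) auto
qed

text \<open>\<open>dilation_bound p r\<close> bounds the \<open>t\<close> for which \<open>mass_scaling r t\<close> restores the virial
  constraint, and \<open>energy_ratio_bound p r\<close> then bounds the factors \<open>r\<^bsup>(p+1)/2\<^esup> t\<^bsup>virial_exp p + 2\<^esup>\<close>
  and \<open>r\<^sup>3 t\<^sup>6\<close> picked up by the two potential terms.\<close>

definition virial_exp :: "real \<Rightarrow> real" where
  "virial_exp p = (3 * p - 7) / 2"

definition dilation_bound :: "real \<Rightarrow> real \<Rightarrow> real" where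
  "dilation_bound p r = max 1 (1 / min (r powr ((p - 1) / 2)) (r\<^sup>2)) powr (1 / virial_exp p)"

definition energy_ratio_bound :: "real \<Rightarrow> real \<Rightarrow> real" where
  "energy_ratio_bound p r =
     max (r powr ((p + 1) / 2) * dilation_bound p r powr (virial_exp p + 2)) (r^3 * dilation_bound p r ^ 6)"

lemma dilation_bound_ge_1: "7/3 \<le> p \<Longrightarrow> 1 \<le> dilation_bound p r"
  unfolding dilation_bound_def virial_exp_def by (intro ge_one_powr_ge_zero) auto

lemma energy_ratio_bound_pos: "7/3 \<le> p \<Longrightarrow> 0 < r \<Longrightarrow> 0 < energy_ratio_bound p r"
  using dilation_bound_ge_1[of p r] by (auto simp: energy_ratio_bound_def less_max_iff_disj)

lemma energy_ratio_bound_1: "energy_ratio_bound p 1 = 1"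
  by (simp add: energy_ratio_bound_def dilation_bound_def)

lemma isCont_energy_ratio_bound: "isCont (energy_ratio_bound p) 1"
  unfolding energy_ratio_bound_def dilation_bound_def by (intro continuous_intros) auto

lemma energy_le_if_virial_eq_0:
  assumes p: "7/3 \<le> p" and "virial p u = 0" "virial p v = 0"
    and A: "Lq_pow (p + 1) v \<le> \<rho> * Lq_pow (p + 1) u" and B: "Lq_pow 6 v \<le> \<rho> * Lq_pow 6 u"
  shows "energy p v \<le> \<rho> * energy p u"
proof -
  define \<alpha> where "\<alpha> = (3 * p - 7) / (4 * (p + 1))"
  have "\<alpha> \<ge> 0"
    using p by (simp add: \<alpha>_def)
  with A have "\<alpha> * Lq_pow (p + 1) v \<le> \<alpha> * (\<rho> * Lq_pow (p + 1) u)"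
    by (rule mult_left_mono)
  moreover have "energy p v = \<alpha> * Lq_pow (p + 1) v + Lq_pow 6 v / 3"
    "\<rho> * energy p u = \<alpha> * (\<rho> * Lq_pow (p + 1) u) + \<rho> * Lq_pow 6 u / 3"
    using assms by (simp_all add: energy_eq_if_virial_eq_0 \<alpha>_def algebra_simps)
  ultimately show ?thesis
    using B by linarith
qed

lemma mass_rescaling:
  assumes p: "7/3 < p" "p < 5" and u: "H1 u" "virial p u = 0" and r: "r > 0"
  obtains v where "H1 v" "Lq_pow 2 v = r * Lq_pow 2 u" "virial p v = 0"
    "energy p v \<le> energy_ratio_bound p r * energy p u"
proof -
  define \<gamma> where "\<gamma> = virial_exp p"
  define c where "c = virial_coeff p"
  define A where "A = Lq_pow (p + 1) u"
  define B where "B = Lq_pow 6 u"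
  have \<gamma>: "0 < \<gamma>" "\<gamma> < 4" and c: "c > 0"
    using p by (simp_all add: \<gamma>_def virial_exp_def c_def virial_coeff_def)
  have A: "A \<ge> 0" and B: "B \<ge> 0"
    by (simp_all add: A_def B_def Lq_pow_nonneg)
  obtain t where t: "0 < t" "t \<le> dilation_bound p r"
    and balance: "r powr ((p - 1) / 2) * t powr \<gamma> * (c * A) + r\<^sup>2 * t^4 * B = c * A + B"
    using power_balance_solvable[OF \<gamma>, of "r powr ((p - 1) / 2)" "r\<^sup>2" "c * A" B] r c A B
    unfolding dilation_bound_def \<gamma>_def by auto
  define v where "v = mass_scaling r t u"
  have mass: "Lq_pow 2 v = r * Lq_pow 2 u"
    using Lq_pow_mass_scaling[OF r t(1), of 2 u] r t by (simp add: v_def)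
  have A_v: "Lq_pow (p + 1) v = r powr ((p + 1) / 2) * t powr (\<gamma> + 2) * A"
  proof -
    have exp: "3 * (p + 1) / 2 - 3 = \<gamma> + 2"
      by (simp add: \<gamma>_def virial_exp_def field_simps)
    show ?thesis
      using Lq_pow_mass_scaling[OF r t(1), of "p + 1" u, unfolded exp] by (simp add: v_def A_def)
  qed
  have B_v: "Lq_pow 6 v = r^3 * t^6 * B"
    using Lq_pow_mass_scaling[OF r t(1), of 6 u] r t by (simp add: v_def B_def powr_numeral)
  have r_powr: "r * r powr ((p - 1) / 2) = r powr ((p + 1) / 2)"
  proof -
    have "r powr ((p + 1) / 2) = r powr (1 + (p - 1) / 2)"
      by (rule arg_cong[where f="(powr) r"]) (simp add: field_simps)
    also have "\<dots> = r * r powr ((p - 1) / 2)"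
      using r by (simp only: powr_add powr_one less_imp_le)
    finally show ?thesis ..
  qed
  have t_powr: "t\<^sup>2 * t powr \<gamma> = t powr (\<gamma> + 2)"
    using t powr_add[of t \<gamma> 2] by (simp add: powr_numeral mult.commute)
  have "virial p v = r * t\<^sup>2 * (c * A + B) - c * Lq_pow (p + 1) v - Lq_pow 6 v"
    using u r t by (simp add: v_def virial_def grad_sq_mass_scaling virial_eq_0_iff A_def B_def c_def
        virial_coeff_def)
  also have "\<dots> = r * t\<^sup>2 * ((c * A + B) - (r powr ((p - 1) / 2) * t powr \<gamma> * (c * A) + r\<^sup>2 * t^4 * B))"
    unfolding A_v B_v r_powr[symmetric] t_powr[symmetric]
    by (simp add: algebra_simps power2_eq_square power3_eq_cube power_numeral_reduce)
  also have "\<dots> = 0"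
    by (simp add: balance)
  finally have "virial p v = 0" .
  have "r powr ((p + 1) / 2) * t powr (\<gamma> + 2) \<le> energy_ratio_bound p r"
    using r t \<gamma> unfolding energy_ratio_bound_def \<gamma>_def
    by (intro max.coboundedI1 mult_left_mono powr_mono2) auto
  then have "Lq_pow (p + 1) v \<le> energy_ratio_bound p r * Lq_pow (p + 1) u"
    unfolding A_v A_def[symmetric] using A by (rule mult_right_mono)
  moreover have "r^3 * t^6 \<le> energy_ratio_bound p r"
    using r t unfolding energy_ratio_bound_def
    by (intro max.coboundedI2 mult_left_mono power_mono) auto
  then have "Lq_pow 6 v \<le> energy_ratio_bound p r * Lq_pow 6 u"
    unfolding B_v B_def[symmetric] using B by (rule mult_right_mono)
  ultimately have "energy p v \<le> energy_ratio_bound p r * energy p u"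
    using p u(2) \<open>virial p v = 0\<close> by (intro energy_le_if_virial_eq_0) auto
  moreover have "H1 v"
    unfolding v_def using u(1) t(1) by (rule H1_mass_scaling)
  ultimately show ?thesis
    using that mass \<open>virial p v = 0\<close> by blast
qed

definition constrained_energies :: "real \<Rightarrow> real \<Rightarrow> real set" where
  "constrained_energies p m = {energy p u | u. H1 u \<and> Lq_pow 2 u = m \<and> virial p u = 0}"

lemma E_min_eq_Inf_constrained_energies: "E_min p m = Inf (constrained_energies p m)"
  by (simp add: E_min_def constrained_energies_def)

lemma bdd_below_constrained_energies: "7/3 \<le> p \<Longrightarrow> bdd_below (constrained_energies p m)"
  by (rule bdd_belowI[of _ 0]) (auto simp: constrained_energies_def energy_nonneg_if_virial_eq_0)

lemma constrained_energies_rescale: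
  assumes p: "7/3 < p" "p < 5" and e: "e \<in> constrained_energies p m" and m: "m > 0" "m' > 0"
  shows "\<exists>e'\<in>constrained_energies p m'. e' \<le> energy_ratio_bound p (m' / m) * e"
proof -
  obtain u where u: "H1 u" "Lq_pow 2 u = m" "virial p u = 0" and "e = energy p u"
    using e unfolding constrained_energies_def by blast
  obtain v where "H1 v" "Lq_pow 2 v = m' / m * Lq_pow 2 u" "virial p v = 0"
    and v_energy: "energy p v \<le> energy_ratio_bound p (m' / m) * energy p u"
    using mass_rescaling[OF p u(1,3), of "m' / m"] m by auto
  moreover have "Lq_pow 2 v = m'"
    using \<open>Lq_pow 2 v = m' / m * Lq_pow 2 u\<close> u(2) m by simp
  ultimately have "energy p v \<in> constrained_energies p m'"
    unfolding constrained_energies_def by blast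
  then show ?thesis
    using v_energy \<open>e = energy p u\<close> by blast
qed

lemma E_min_rescaling_bound:
  assumes p: "7/3 < p" "p < 5" and m: "m > 0" "m' > 0" and ne: "constrained_energies p m \<noteq> {}"
  shows "E_min p m' \<le> energy_ratio_bound p (m' / m) * E_min p m"
proof -
  let ?\<rho> = "energy_ratio_bound p (m' / m)"
  have \<rho>: "?\<rho> > 0"
    using p m by (simp add: energy_ratio_bound_pos)
  have "E_min p m' / ?\<rho> \<le> Inf (constrained_energies p m)"
  proof (rule cInf_greatest[OF ne])
    fix e assume "e \<in> constrained_energies p m"
    then obtain e' where "e' \<in> constrained_energies p m'" "e' \<le> ?\<rho> * e"
      using constrained_energies_rescale[OF p _ m] by blast
    then have "E_min p m' \<le> ?\<rho> * e"
      using cInf_lower[OF _ bdd_below_constrained_energies, of e' p m'] p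
      unfolding E_min_eq_Inf_constrained_energies by linarith
    then show "E_min p m' / ?\<rho> \<le> e"
      using \<rho> by (simp add: pos_divide_le_eq mult.commute)
  qed
  then show ?thesis
    using \<rho> by (simp add: E_min_eq_Inf_constrained_energies pos_divide_le_eq mult.commute)
qed

lemma continuous_on_pos_if_rescaling_bound:
  fixes f \<rho> :: "real \<Rightarrow> real"
  assumes \<rho>_cont: "isCont \<rho> 1" and \<rho>_1: "\<rho> 1 = 1" and \<rho>_pos: "\<And>r. 0 < r \<Longrightarrow> 0 < \<rho> r"
    and bound: "\<And>m m'. 0 < m \<Longrightarrow> 0 < m' \<Longrightarrow> f m' \<le> \<rho> (m' / m) * f m"
  shows "continuous_on {0<..} f"
  unfolding continuous_on_def
proof (intro ballI)
  fix m0 :: real assume "m0 \<in> {0<..}"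
  then have m0: "m0 > 0" by simp
  let ?F = "at m0 within {0<..}"
  have \<rho>_lim: "((\<lambda>m. \<rho> (g m)) \<longlongrightarrow> 1) ?F" if "(g \<longlongrightarrow> 1) ?F" for g
    using isCont_tendsto_compose[OF \<rho>_cont that] \<rho>_1 by simp
  have "((\<lambda>m. m / m0) \<longlongrightarrow> 1) ?F" "((\<lambda>m. m0 / m) \<longlongrightarrow> 1) ?F"
    using m0 by (auto intro!: tendsto_eq_intros)
  then have "((\<lambda>m. f m0 / \<rho> (m0 / m)) \<longlongrightarrow> f m0 / 1) ?F"
    "((\<lambda>m. \<rho> (m / m0) * f m0) \<longlongrightarrow> 1 * f m0) ?F"
    by (intro tendsto_mult tendsto_divide tendsto_const \<rho>_lim; simp)+
  then have lims: "((\<lambda>m. f m0 / \<rho> (m0 / m)) \<longlongrightarrow> f m0) ?F" "((\<lambda>m. \<rho> (m / m0) * f m0) \<longlongrightarrow> f m0) ?F"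
    by simp_all
  have "f m0 / \<rho> (m0 / m) \<le> f m \<and> f m \<le> \<rho> (m / m0) * f m0" if "m \<in> {0<..}" for m
    using that m0 bound[of m m0] bound[of m0 m] \<rho>_pos[of "m0 / m"]
    by (simp add: pos_divide_le_eq mult.commute)
  then have bounds: "\<forall>\<^sub>F m in ?F. f m0 / \<rho> (m0 / m) \<le> f m \<and> f m \<le> \<rho> (m / m0) * f m0"
    unfolding eventually_at_filter by (intro always_eventually) blast
  have "\<forall>\<^sub>F m in ?F. f m0 / \<rho> (m0 / m) \<le> f m" "\<forall>\<^sub>F m in ?F. f m \<le> \<rho> (m / m0) * f m0"
    using bounds by (eventually_elim, simp)+
  then show "(f \<longlongrightarrow> f m0) ?F"
    by (rule tendsto_sandwich[OF _ _ lims])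
qed

theorem proposition9p1:
  fixes p :: real
  assumes "7/3 < p" and "p < 5"
  shows "continuous_on {0<..} (E_min p)"
proof (cases "\<exists>m>0. constrained_energies p m \<noteq> {}")
  case True
  then obtain m0 where m0: "m0 > 0" "constrained_energies p m0 \<noteq> {}" by blast
  have "constrained_energies p m \<noteq> {}" if "m > 0" for m
    using constrained_energies_rescale[OF assms _ m0(1) that] m0(2) by blast
  then show ?thesis
    using assms
    by (intro continuous_on_pos_if_rescaling_bound[where \<rho> = "energy_ratio_bound p"]
        isCont_energy_ratio_bound energy_ratio_bound_1 energy_ratio_bound_pos E_min_rescaling_bound)
      auto
next
  case False
  then have "E_min p m = Inf {}" if "m \<in> {0<..}" for m
    using that by (simp add: E_min_eq_Inf_constrained_energies)
  then show ?thesis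
    using continuous_on_const continuous_on_cong by (metis (no_types, lifting))
qed

end
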